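(* Let $\gamma$ be non-decreasing with $\gamma\in L^2(0,1)$, $\int_0^1\gamma=1$ and $\gamma\not\equiv1$. Let $\mu\in\mathbb R$ and $\sigma>0$, and let $c_0=\operatorname{corr}(F^{-1}(U),\gamma(U))<1$. Assume $$(\mu_F-\mu)^2+(\sigma_F-\sigma)^2<\varepsilon\le(\mu_F-\mu)^2+(\sigma_F-\sigma)^2+2\sigma\sigma_F(1-c_0).$$ Put $$K=\tfrac12\big(\mu_F^2+\sigma_F^2+\mu^2+\sigma^2-2\mu\mu_F-\varepsilon\big),\qquad V=\operatorname{var}(\gamma(U)),\qquad C_{\gamma,F}=\operatorname{cov}(F^{-1}(U),\gamma(U)),$$ $$\Delta=\frac{K^2(C_{\gamma,F}^2-V\sigma_F^2)}{K^2-\sigma^2\sigma_F^2}.$$ Then $K\ge0$ and $\Delta\ge0$. Moreover, the unique $\lambda\ge0$ with $$d_W(F^{-1},h_\lambda)^2=\mathbb E\big((F^{-1}(U)-h_\lambda(U))^2\big)=\varepsilon$$ is $$\lambda=\frac{\sqrt\Delta-C_{\gamma,F}}{\sigma_F^2}.$$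
   Context: $U\sim\mathcal U(0,1)$. $F$ is a reference distribution function with finite second moment, mean $\mu_F$, standard deviation $\sigma_F>0$, and quantile function $F^{-1}(u)=\inf\{y:F(y)\ge u\}$. For $\lambda\ge0$, $$h_\lambda(u)=\mu+\sigma\,\frac{\gamma(u)+\lambda F^{-1}(u)-a_\lambda}{b_\lambda},$$ with $a_\lambda=\mathbb E(\gamma(U)+\lambda F^{-1}(U))$ and $b_\lambda=\operatorname{std}(\gamma(U)+\lambda F^{-1}(U))$. $d_W(G_1^{-1},G_2^{-1})=\big(\int_0^1(G_1^{-1}-G_2^{-1})^2\big)^{1/2}$. *)

theory Defs
  imports "HOL-Probability.Probability"
begin

text \<open>Expectation of f(U) for U uniform on (0,1).\<close>
definition EU :: "(real \<Rightarrow> real) \<Rightarrow> real" where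
  "EU f = (LBINT u:{0<..<1}. f u)"

definition covU :: "(real \<Rightarrow> real) \<Rightarrow> (real \<Rightarrow> real) \<Rightarrow> real" where
  "covU f g = EU (\<lambda>u. (f u - EU f) * (g u - EU g))"

definition varU :: "(real \<Rightarrow> real) \<Rightarrow> real" where
  "varU f = covU f f"

definition stdU :: "(real \<Rightarrow> real) \<Rightarrow> real" where
  "stdU f = sqrt (varU f)"

definition corrU :: "(real \<Rightarrow> real) \<Rightarrow> (real \<Rightarrow> real) \<Rightarrow> real" where
  "corrU f g = covU f g / (stdU f * stdU g)"

text \<open>Generalized inverse (quantile function) of a distribution function F.\<close>
definition quantile :: "(real \<Rightarrow> real) \<Rightarrow> real \<Rightarrow> real" where
  "quantile F u = Inf {y. F y \<ge> u}"

definition hfun :: "(real \<Rightarrow> real) \<Rightarrow> (real \<Rightarrow> real) \<Rightarrow> real \<Rightarrow> real \<Rightarrow> real \<Rightarrow> real \<Rightarrow> real" where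
  "hfun \<gamma> Q \<mu> \<sigma> lam u =
     (let g = (\<lambda>v. \<gamma> v + lam * Q v) in \<mu> + \<sigma> * (g u - EU g) / stdU g)"

text \<open>Wasserstein-2 distance between two quantile functions.\<close>
definition dW :: "(real \<Rightarrow> real) \<Rightarrow> (real \<Rightarrow> real) \<Rightarrow> real" where
  "dW G1 G2 = sqrt (LBINT u:{0<..<1}. (G1 u - G2 u)^2)"

end

theory Submission
  imports Defs
begin

text \<open>Realise U as the identity on ((0,1), Lebesgue measure). The quantile function Q pushes this
  space forward to F, so \<mu>F = E Q and \<sigma>F^2 = var Q. With G = \<gamma> + \<lambda> Q, the function
  h_\<lambda> = \<mu> + \<sigma> (G - E G) / std G is an affine combination of the centred Q and \<gamma>, and expanding
  the square gives
    d_W(Q, h_\<lambda>)^2 = (\<mu>F - \<mu>)^2 + \<sigma>F^2 + \<sigma>^2 - 2 \<sigma> cov(Q, G) / std G,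
  where cov(Q, G) = C + \<lambda> \<sigma>F^2 and var G = V + 2 \<lambda> C + \<lambda>^2 \<sigma>F^2. So d_W^2 = \<epsilon> iff
  \<sigma> (C + \<lambda> \<sigma>F^2) = K std G; squaring turns this into (C + \<lambda> \<sigma>F^2)^2 = \<Delta>, whose
  nonnegative root gives \<lambda>. The signs needed along the way come from C \<ge> 0 (Chebyshev's
  association inequality: Q and \<gamma> are both nondecreasing), V > 0 (\<gamma> is monotone and not
  constant), Cauchy-Schwarz C^2 \<le> V \<sigma>F^2, and the two bounds on \<epsilon>, which say exactly
  K < \<sigma> \<sigma>F and \<sigma> C \<le> K sqrt V.\<close>

definition U01 :: "real measure" where
  "U01 = restrict_space lborel {0<..<1}"

lemma space_U01 [simp]: "space U01 = {0<..<1}"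
  by (simp add: U01_def space_restrict_space)

interpretation U01: prob_space U01
  unfolding U01_def
  by (auto simp: emeasure_restrict_space space_restrict_space intro!: prob_spaceI)

lemma measure_U01 [simp]: "measure U01 {0<..<1} = 1"
  using U01.prob_space by simp

lemma EU_eq_integral_U01: "EU f = integral\<^sup>L U01 f"
  unfolding EU_def set_lebesgue_integral_def U01_def
  by (subst integral_restrict_space) auto

lemma set_integrable_iff_integrable_U01:
  "set_integrable lborel {0<..<1} f \<longleftrightarrow> integrable U01 (f :: real \<Rightarrow> real)"
  unfolding set_integrable_def U01_def
  using integrable_restrict_space[of "{0<..<1}" lborel f] by simp

lemma set_borel_measurable_iff_measurable_U01:
  "set_borel_measurable lborel {0<..<1} f \<longleftrightarrow> (f :: real \<Rightarrow> real) \<in> borel_measurable U01"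
  unfolding set_borel_measurable_def U01_def
  by (subst borel_measurable_restrict_space_iff) auto

lemma AE_U01_ex_in_interval:
  assumes "AE u in U01. P u" and "0 \<le> a" "a < b" "b \<le> 1"
  shows "\<exists>u\<in>{a<..<b}. P u"
proof (rule ccontr)
  assume none: "\<not> (\<exists>u\<in>{a<..<b}. P u)"
  obtain N where N: "{u \<in> space U01. \<not> P u} \<subseteq> N" "N \<in> null_sets U01"
    using assms(1) unfolding eventually_ae_filter by blast
  have sub: "{a<..<b} \<subseteq> {0<..<1}" using assms(2,4) by auto
  have "{a<..<b} \<subseteq> N"
    using N(1) none sub by force
  then have "{a<..<b} \<in> null_sets U01"
    using sub by (intro null_sets_subset[OF N(2)]) (auto simp: U01_def sets_restrict_space_iff)
  moreover have "emeasure U01 {a<..<b} = ennreal (b - a)"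
    using sub assms(3) by (simp add: U01_def emeasure_restrict_space Int_absorb2)
  ultimately show False using assms(3) by (simp add: null_setsD1)
qed

definition L2U :: "(real \<Rightarrow> real) \<Rightarrow> bool" where
  "L2U f \<longleftrightarrow> f \<in> borel_measurable U01 \<and> integrable U01 (\<lambda>u. (f u)^2)"

lemma L2U_integrable: "L2U f \<Longrightarrow> integrable U01 f"
  unfolding L2U_def by (blast intro: U01.square_integrable_imp_integrable)

lemma L2U_integrable_mult:
  assumes "L2U f" "L2U g"
  shows "integrable U01 (\<lambda>u. f u * g u)"
proof (rule Bochner_Integration.integrable_bound)
  show "integrable U01 (\<lambda>u. (f u)^2 + (g u)^2)"
    using assms unfolding L2U_def by auto
  show "(\<lambda>u. f u * g u) \<in> borel_measurable U01"
    using assms unfolding L2U_def by auto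
  have "\<bar>f u\<bar> * \<bar>g u\<bar> \<le> (f u)^2 + (g u)^2" for u
  proof -
    have "0 \<le> \<bar>f u\<bar> * \<bar>g u\<bar>" by simp
    moreover have "2 * (\<bar>f u\<bar> * \<bar>g u\<bar>) \<le> (f u)^2 + (g u)^2"
      using sum_squares_bound[of "\<bar>f u\<bar>" "\<bar>g u\<bar>"] by (simp add: mult.assoc)
    ultimately show ?thesis by linarith
  qed
  then show "AE u in U01. norm (f u * g u) \<le> norm ((f u)^2 + (g u)^2)"
    by (simp add: abs_mult)
qed

lemma L2U_integrable_centred_mult:
  assumes "L2U f" "L2U g"
  shows "integrable U01 (\<lambda>u. (f u - a) * (g u - b))"
proof -
  have "(\<lambda>u. (f u - a) * (g u - b)) = (\<lambda>u. f u * g u - b * f u - a * g u + a * b)"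
    by (simp add: algebra_simps)
  then show ?thesis
    using assms L2U_integrable L2U_integrable_mult by simp
qed

lemma EU_add_scaled:
  assumes "integrable U01 f" "integrable U01 g"
  shows "EU (\<lambda>u. g u + l * f u) = EU g + l * EU f"
  using assms by (simp add: EU_eq_integral_U01)

lemma EU_square_nonneg: "0 \<le> EU (\<lambda>u. (f u)^2)"
  unfolding EU_eq_integral_U01 by (rule integral_nonneg_AE) simp

lemma varU_nonneg: "0 \<le> varU f"
  unfolding varU_def covU_def EU_eq_integral_U01 by (rule integral_nonneg_AE) simp

lemma covU_commute: "covU f g = covU g f"
  by (simp add: covU_def mult.commute)

lemma EU_mult_centred_combination:
  assumes f: "L2U f" and g: "L2U g"
  shows "EU (\<lambda>u. (a * (f u - EU f) + b * (g u - EU g) + d) *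
                 (a' * (f u - EU f) + b' * (g u - EU g) + d'))
    = a * a' * varU f + (a * b' + b * a') * covU f g + b * b' * varU g + d * d'"
proof -
  define X where "X = (\<lambda>u. f u - EU f)"
  define Y where "Y = (\<lambda>u. g u - EU g)"
  have int: "integrable U01 X" "integrable U01 Y" "integrable U01 (\<lambda>u. X u * X u)"
    "integrable U01 (\<lambda>u. X u * Y u)" "integrable U01 (\<lambda>u. Y u * Y u)"
    using L2U_integrable[OF f] L2U_integrable[OF g]
      L2U_integrable_centred_mult[OF f f] L2U_integrable_centred_mult[OF f g]
      L2U_integrable_centred_mult[OF g g]
    by (simp_all add: X_def Y_def)
  have mean: "integral\<^sup>L U01 X = 0" "integral\<^sup>L U01 Y = 0"
    using L2U_integrable[OF f] L2U_integrable[OF g]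
    by (simp_all add: X_def Y_def EU_eq_integral_U01)
  have moments: "varU f = integral\<^sup>L U01 (\<lambda>u. X u * X u)"
    "covU f g = integral\<^sup>L U01 (\<lambda>u. X u * Y u)" "varU g = integral\<^sup>L U01 (\<lambda>u. Y u * Y u)"
    by (simp_all add: varU_def covU_def X_def Y_def EU_eq_integral_U01)
  have "(a * (f u - EU f) + b * (g u - EU g) + d) * (a' * (f u - EU f) + b' * (g u - EU g) + d')
    = a * a' * (X u * X u) + ((a * b' + b * a') * (X u * Y u) + (b * b' * (Y u * Y u)
      + ((a * d' + d * a') * X u + ((b * d' + d * b') * Y u + d * d'))))" for u
    by (simp add: X_def Y_def algebra_simps)
  then show ?thesis
    using int by (simp add: EU_eq_integral_U01 mean moments)
qed

lemma EU_square_centred_combination: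
  assumes "L2U f" "L2U g"
  shows "EU (\<lambda>u. (a * (f u - EU f) + b * (g u - EU g) + d)^2)
    = a^2 * varU f + 2 * a * b * covU f g + b^2 * varU g + d^2"
  using EU_mult_centred_combination[OF assms, of a b d a b d]
  by (simp add: power2_eq_square algebra_simps)

lemma covU_eq_EU_shift:
  assumes "L2U f" "L2U g"
  shows "covU f g = EU (\<lambda>u. (f u - c) * (g u - EU g))"
proof -
  have "EU (\<lambda>u. (f u - c) * (g u - EU g)) = EU (\<lambda>u.
      (1 * (f u - EU f) + 0 * (g u - EU g) + (EU f - c)) * (0 * (f u - EU f) + 1 * (g u - EU g) + 0))"
    by simp
  also have "\<dots> = covU f g"
    using EU_mult_centred_combination[OF assms, of 1 0 "EU f - c" 0 1 0] by simp
  finally show ?thesis ..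
qed

lemma varU_add_scaled:
  assumes f: "L2U f" and g: "L2U g"
  shows "varU (\<lambda>u. g u + l * f u) = varU g + 2 * l * covU f g + l^2 * varU f"
proof -
  have "varU (\<lambda>u. g u + l * f u) = EU (\<lambda>u.
      (l * (f u - EU f) + 1 * (g u - EU g) + 0) * (l * (f u - EU f) + 1 * (g u - EU g) + 0))"
    unfolding varU_def covU_def EU_add_scaled[OF L2U_integrable[OF f] L2U_integrable[OF g]]
    by (rule arg_cong[where f = EU], rule ext) algebra
  also have "\<dots> = l * l * varU f + (l * 1 + 1 * l) * covU f g + 1 * 1 * varU g + 0 * 0"
    by (rule EU_mult_centred_combination[OF f g])
  finally show ?thesis
    by (simp add: algebra_simps power2_eq_square)
qed

lemma AE_eq_0_if_EU_eq_0_sign_const: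
  assumes "integrable U01 h" "EU h = 0"
    and "(\<forall>u\<in>{0<..<1}. 0 \<le> h u) \<or> (\<forall>u\<in>{0<..<1}. h u \<le> 0)"
  shows "AE u in U01. h u = 0"
proof -
  have nonneg_case: "AE u in U01. k u = 0"
    if k: "integrable U01 k" "EU k = 0" "\<forall>u\<in>{0<..<1}. 0 \<le> k u" for k
  proof -
    have "AE u in U01. 0 \<le> k u"
      using k(3) by (intro AE_I2) simp
    then show ?thesis
      using integral_nonneg_eq_0_iff_AE[OF k(1)] k(2) by (simp add: EU_eq_integral_U01)
  qed
  show ?thesis
    using assms(3)
  proof
    assume "\<forall>u\<in>{0<..<1}. 0 \<le> h u"
    then show ?thesis
      using nonneg_case assms(1,2) by blast
  next
    assume "\<forall>u\<in>{0<..<1}. h u \<le> 0"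
    then have "AE u in U01. - h u = 0"
      using nonneg_case[of "\<lambda>u. - h u"] assms(1,2) by (simp add: EU_eq_integral_U01)
    then show ?thesis
      by simp
  qed
qed

lemma AE_eq_EU_if_varU_eq_0:
  assumes "L2U g" "varU g = 0"
  shows "AE u in U01. g u = EU g"
proof -
  have "AE u in U01. (g u - EU g) * (g u - EU g) = 0"
    using assms L2U_integrable_centred_mult[OF assms(1) assms(1)]
    by (intro AE_eq_0_if_EU_eq_0_sign_const) (auto simp: varU_def covU_def)
  then show ?thesis
    by (rule eventually_mono) simp
qed

lemma covU_eq_0_if_AE_eq_EU:
  assumes "AE u in U01. g u = EU g"
  shows "covU f g = 0"
proof -
  have "AE u in U01. (f u - EU f) * (g u - EU g) = 0"
    using assms by (rule eventually_mono) simp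
  then show ?thesis
    unfolding covU_def EU_eq_integral_U01[of "\<lambda>u. (f u - EU f) * (g u - EU g)"]
    by (rule integral_eq_zero_AE)
qed

lemma covU_sq_le_varU_mult:
  assumes f: "L2U f" and g: "L2U g"
  shows "(covU f g)^2 \<le> varU f * varU g"
proof (cases "varU f = 0")
  case True
  then have "covU g f = 0"
    using covU_eq_0_if_AE_eq_EU AE_eq_EU_if_varU_eq_0[OF f] by blast
  then show ?thesis
    using True by (simp add: covU_commute)
next
  case False
  then have v: "0 < varU f"
    using varU_nonneg[of f] by linarith
  define x where "x = - covU f g / varU f"
  have "0 \<le> EU (\<lambda>u. (x * (f u - EU f) + 1 * (g u - EU g) + 0)^2)"
    unfolding EU_eq_integral_U01 by (rule integral_nonneg_AE) simp
  also have "\<dots> = varU g - (covU f g)^2 / varU f"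
    unfolding EU_square_centred_combination[OF f g] x_def
    using v by (simp add: field_simps power2_eq_square)
  finally show ?thesis
    using v by (simp add: field_simps)
qed

lemma mono_on_AE_eq_const:
  fixes g :: "real \<Rightarrow> real"
  assumes mono: "mono_on {0<..<1} g" and AE: "AE u in U01. g u = c"
  shows "\<forall>u\<in>{0<..<1}. g u = c"
proof
  fix u :: real
  assume u: "u \<in> {0<..<1}"
  show "g u = c"
  proof (rule ccontr)
    assume "g u \<noteq> c"
    then consider "c < g u" | "g u < c"
      by linarith
    then show False
    proof cases
      case 1
      obtain v where "v \<in> {u<..<1}" "g v = c"
        using AE_U01_ex_in_interval[OF AE, of u 1] u by auto
      then show False
        using mono_onD[OF mono, of u v] u 1 by auto
    next
      case 2
      obtain v where "v \<in> {0<..<u}" "g v = c"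
        using AE_U01_ex_in_interval[OF AE, of 0 u] u by auto
      then show False
        using mono_onD[OF mono, of v u] u 2 by auto
    qed
  qed
qed

lemma varU_pos_if_mono_on_nonconst:
  assumes "L2U g" "mono_on {0<..<1} g" "\<not> (\<forall>u\<in>{0<..<1}. g u = EU g)"
  shows "0 < varU g"
proof -
  have "varU g \<noteq> 0"
    using AE_eq_EU_if_varU_eq_0[OF assms(1)] mono_on_AE_eq_const[OF assms(2)] assms(3) by blast
  then show ?thesis
    using varU_nonneg[of g] by linarith
qed

lemma mono_on_common_threshold:
  fixes f g :: "real \<Rightarrow> real"
  assumes f: "mono_on {0<..<1} f" and g: "mono_on {0<..<1} g"
    and s: "s \<in> {0<..<1}" "g s \<le> m" and t: "t \<in> {0<..<1}" "m < g t"
  obtains c where "\<And>u. u \<in> {0<..<1} \<Longrightarrow> 0 \<le> (f u - c) * (g u - m)"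
proof -
  define S where "S = {u \<in> {0<..<1}. g u \<le> m}"
  have before: "u < v" if "u \<in> S" "v \<in> {0<..<1}" "v \<notin> S" for u v
  proof (rule ccontr)
    assume "\<not> u < v"
    then have "g v \<le> g u"
      using mono_onD[OF g, of v u] that unfolding S_def by auto
    then show False
      using that unfolding S_def by auto
  qed
  have "t \<notin> S"
    using t(2) by (simp add: S_def)
  have "f u \<le> f t" if "u \<in> S" for u
    using before[OF that t(1) \<open>t \<notin> S\<close>] mono_onD[OF f, of u t] that t(1) unfolding S_def by auto
  then have bdd: "bdd_above (f ` S)"
    by (intro bdd_aboveI2)
  define c where "c = Sup (f ` S)"
  have below_c: "f u \<le> c" if "u \<in> S" for u
    unfolding c_def using bdd that by (intro cSup_upper) auto
  have above_c: "c \<le> f v" if v: "v \<in> {0<..<1}" "v \<notin> S" for v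
  proof -
    have "f u \<le> f v" if "u \<in> S" for u
      using before[OF that v] mono_onD[OF f, of u v] that v unfolding S_def by auto
    then show ?thesis
      unfolding c_def using s by (intro cSup_least) (auto simp: S_def)
  qed
  show ?thesis
  proof (rule that)
    fix u :: real
    assume "u \<in> {0<..<1}"
    then show "0 \<le> (f u - c) * (g u - m)"
      using below_c[of u] above_c[of u] by (cases "u \<in> S") (auto simp: S_def mult_nonpos_nonpos)
  qed
qed

text \<open>Chebyshev's association inequality: as covU f g = EU ((f - c) * (g - EU g)) for every
  constant c, it suffices to shift f so that it changes sign where g crosses its mean.\<close>
lemma covU_nonneg_if_mono_on:
  assumes f: "L2U f" "mono_on {0<..<1} f" and g: "L2U g" "mono_on {0<..<1} g"
  shows "0 \<le> covU f g"
proof (cases "\<exists>s\<in>{0<..<1}. \<exists>t\<in>{0<..<1}. g s \<le> EU g \<and> EU g < g t")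
  case True
  then obtain c where c: "\<And>u. u \<in> {0<..<1} \<Longrightarrow> 0 \<le> (f u - c) * (g u - EU g)"
    using mono_on_common_threshold[OF f(2) g(2)] by blast
  have "0 \<le> EU (\<lambda>u. (f u - c) * (g u - EU g))"
    unfolding EU_eq_integral_U01[of "\<lambda>u. (f u - c) * (g u - EU g)"]
    using c by (intro integral_nonneg_AE AE_I2) simp
  then show ?thesis
    using covU_eq_EU_shift[OF f(1) g(1)] by simp
next
  case False
  then have "(\<forall>u\<in>{0<..<1}. 0 \<le> g u - EU g) \<or> (\<forall>u\<in>{0<..<1}. g u - EU g \<le> 0)"
    by force
  then have "AE u in U01. g u - EU g = 0"
    using L2U_integrable[OF g(1)]
    by (intro AE_eq_0_if_EU_eq_0_sign_const) (auto simp: EU_eq_integral_U01)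
  then have "covU f g = 0"
    by (intro covU_eq_0_if_AE_eq_EU) (rule eventually_mono, simp)
  then show ?thesis
    by simp
qed

lemma quantile_cdf_distr_U01:
  assumes "real_distribution M"
  shows "quantile (cdf M) \<in> borel_measurable U01"
    and "distr U01 borel (quantile (cdf M)) = M"
    and "mono_on {0<..<1} (quantile (cdf M))"
proof -
  interpret cdf_distribution M
    using assms unfolding cdf_distribution_def .
  have Q: "quantile (cdf M) = (\<lambda>\<omega>. Inf {x. \<omega> \<le> cdf M x})"
    unfolding quantile_def ..
  show "quantile (cdf M) \<in> borel_measurable U01"
    unfolding Q U01_def using measurable_CI
    by (simp add: measurable_def sets_restrict_space space_restrict_space)
  show "distr U01 borel (quantile (cdf M)) = M"
    unfolding Q U01_def by (rule distr_I_eq_M)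
  show "mono_on {0<..<1} (quantile (cdf M))"
    unfolding Q by (rule mono_I)
qed

lemma quantile_cdf_moments:
  assumes M: "real_distribution M" and sq: "integrable M (\<lambda>x. x^2)"
  shows "L2U (quantile (cdf M))"
    and "EU (quantile (cdf M)) = (\<integral>x. x \<partial>M)"
    and "varU (quantile (cdf M)) = (\<integral>x. (x - (\<integral>x. x \<partial>M))^2 \<partial>M)"
proof -
  let ?Q = "quantile (cdf M)"
  note Q = quantile_cdf_distr_U01[OF M]
  have transfer: "integral\<^sup>L M f = EU (\<lambda>u. f (?Q u))"
      "integrable M f \<longleftrightarrow> integrable U01 (\<lambda>u. f (?Q u))"
    if "f \<in> borel_measurable borel" for f :: "real \<Rightarrow> real"
    using integral_distr[OF Q(1) that] integrable_distr_eq[OF Q(1) that] Q(2)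
    by (simp_all add: EU_eq_integral_U01)
  show "L2U ?Q"
    unfolding L2U_def using Q(1) transfer(2)[of "\<lambda>x. x^2"] sq by simp
  show mean: "EU ?Q = (\<integral>x. x \<partial>M)"
    using transfer(1)[of "\<lambda>x. x"] by simp
  show "varU ?Q = (\<integral>x. (x - (\<integral>x. x \<partial>M))^2 \<partial>M)"
    unfolding varU_def covU_def mean
    using transfer(1)[of "\<lambda>x. (x - (\<integral>x. x \<partial>M))^2"] by (simp add: power2_eq_square)
qed

lemma dW_eq_sqrt_EU: "dW G1 G2 = sqrt (EU (\<lambda>u. (G1 u - G2 u)^2))"
  by (simp add: dW_def EU_def)

lemma dW_hfun_sq:
  assumes Q: "L2U Q" and \<gamma>: "L2U \<gamma>"
    and pos: "0 < varU \<gamma> + 2 * lam * covU Q \<gamma> + lam^2 * varU Q"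
  shows "(dW Q (hfun \<gamma> Q \<mu> \<sigma> lam))^2 = (EU Q - \<mu>)^2 + varU Q + \<sigma>^2
     - 2 * \<sigma> * (covU Q \<gamma> + lam * varU Q) / sqrt (varU \<gamma> + 2 * lam * covU Q \<gamma> + lam^2 * varU Q)"
proof -
  define s where "s = sqrt (varU \<gamma> + 2 * lam * covU Q \<gamma> + lam^2 * varU Q)"
  define k where "k = \<sigma> / s"
  have s: "0 < s" "s^2 = varU \<gamma> + 2 * lam * covU Q \<gamma> + lam^2 * varU Q"
    using pos by (simp_all add: s_def)
  have std: "stdU (\<lambda>v. \<gamma> v + lam * Q v) = s"
    unfolding stdU_def s_def varU_add_scaled[OF Q \<gamma>] ..
  have diff: "Q u - hfun \<gamma> Q \<mu> \<sigma> lam u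
      = (1 - k * lam) * (Q u - EU Q) + (- k) * (\<gamma> u - EU \<gamma>) + (EU Q - \<mu>)" for u
    unfolding hfun_def Let_def std EU_add_scaled[OF L2U_integrable[OF Q] L2U_integrable[OF \<gamma>]] k_def
    using s(1) by (simp add: field_simps)
  have "(dW Q (hfun \<gamma> Q \<mu> \<sigma> lam))^2
      = EU (\<lambda>u. ((1 - k * lam) * (Q u - EU Q) + (- k) * (\<gamma> u - EU \<gamma>) + (EU Q - \<mu>))^2)"
    unfolding dW_eq_sqrt_EU diff using EU_square_nonneg by simp
  also have "\<dots> = (EU Q - \<mu>)^2 + varU Q - 2 * k * (covU Q \<gamma> + lam * varU Q) + k^2 * s^2"
    unfolding EU_square_centred_combination[OF Q \<gamma>] s(2) by (simp add: algebra_simps power2_eq_square)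
  also have "\<dots> = (EU Q - \<mu>)^2 + varU Q + \<sigma>^2 - 2 * \<sigma> * (covU Q \<gamma> + lam * varU Q) / s"
    using s(1) by (simp add: k_def power_divide)
  finally show ?thesis
    unfolding s_def .
qed

lemma dW_hfun_sq_eq_iff:
  assumes Q: "L2U Q" and \<gamma>: "L2U \<gamma>"
    and pos: "0 < varU \<gamma> + 2 * lam * covU Q \<gamma> + lam^2 * varU Q"
    and K: "2 * K = (EU Q - \<mu>)^2 + varU Q + \<sigma>^2 - \<epsilon>"
  shows "(dW Q (hfun \<gamma> Q \<mu> \<sigma> lam))^2 = \<epsilon> \<longleftrightarrow>
    \<sigma> * (covU Q \<gamma> + lam * varU Q) = K * sqrt (varU \<gamma> + 2 * lam * covU Q \<gamma> + lam^2 * varU Q)"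
proof -
  define r where "r = sqrt (varU \<gamma> + 2 * lam * covU Q \<gamma> + lam^2 * varU Q)"
  have r: "0 < r"
    using pos by (simp add: r_def)
  have "(dW Q (hfun \<gamma> Q \<mu> \<sigma> lam))^2 = \<epsilon> \<longleftrightarrow> 2 * \<sigma> * (covU Q \<gamma> + lam * varU Q) / r = 2 * K"
    unfolding dW_hfun_sq[OF Q \<gamma> pos] r_def[symmetric] K by linarith
  also have "\<dots> \<longleftrightarrow> \<sigma> * (covU Q \<gamma> + lam * varU Q) = K * r"
    using r by (auto simp: field_simps)
  finally show ?thesis
    unfolding r_def .
qed

lemma discriminant_nonneg:
  fixes s V C \<sigma> K :: real
  assumes "C^2 \<le> V * s^2" "0 \<le> K" "K < \<sigma> * s"
  shows "0 \<le> K^2 * (C^2 - V * s^2) / (K^2 - \<sigma>^2 * s^2)"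
proof -
  have "K^2 < (\<sigma> * s)^2"
    using assms(2,3) by (intro power_strict_mono) auto
  then show ?thesis
    using assms(1) by (intro divide_nonpos_neg mult_nonneg_nonpos) (auto simp: power_mult_distrib)
qed

lemma le_sqrt_discriminant:
  fixes s V C \<sigma> K :: real
  assumes "0 < s" "0 < V" "0 \<le> C" "0 \<le> K" "K < \<sigma> * s" "\<sigma> * C \<le> K * sqrt V"
  shows "C \<le> sqrt (K^2 * (C^2 - V * s^2) / (K^2 - \<sigma>^2 * s^2))"
proof -
  have den: "K^2 - \<sigma>^2 * s^2 < 0"
    using power_strict_mono[OF assms(5) assms(4), of 2] by (simp add: power_mult_distrib)
  have "0 < \<sigma> * s"
    using assms(4,5) by linarith
  then have "0 < \<sigma>"
    using assms(1) by (simp add: zero_less_mult_iff)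
  then have "(\<sigma> * C)^2 \<le> (K * sqrt V)^2"
    using assms(3,6) by (intro power_mono) auto
  then have "\<sigma>^2 * C^2 \<le> K^2 * V"
    using assms(2) by (simp add: power_mult_distrib)
  then have "0 \<le> s^2 * (\<sigma>^2 * C^2 - K^2 * V) / (K^2 - \<sigma>^2 * s^2)"
    using den by (intro divide_nonpos_neg mult_nonneg_nonpos) auto
  also have "\<dots> = K^2 * (C^2 - V * s^2) / (K^2 - \<sigma>^2 * s^2) - C^2"
    using den by (simp add: field_simps)
  finally have "sqrt (C^2) \<le> sqrt (K^2 * (C^2 - V * s^2) / (K^2 - \<sigma>^2 * s^2))"
    by (intro real_sqrt_le_mono) simp
  then show ?thesis
    using assms(3) by simp
qed

lemma scaled_eq_sqrt_quadratic_iff: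
  fixes s V C \<sigma> K l :: real
  assumes s: "0 < s" and V: "0 < V" and C: "0 \<le> C" "C^2 \<le> V * s^2"
    and K: "0 \<le> K" "K < \<sigma> * s" and l: "0 \<le> l"
  defines "\<Delta> \<equiv> K^2 * (C^2 - V * s^2) / (K^2 - \<sigma>^2 * s^2)"
  shows "\<sigma> * (C + l * s^2) = K * sqrt (V + 2 * l * C + l^2 * s^2) \<longleftrightarrow> l = (sqrt \<Delta> - C) / s^2"
proof -
  define t where "t = C + l * s^2"
  define q where "q = V + 2 * l * C + l^2 * s^2"
  have t: "0 \<le> t"
    using C l by (simp add: t_def)
  have q: "0 < q"
    using V C l by (simp add: q_def add_pos_nonneg)
  have "0 < \<sigma> * s"
    using K by linarith
  then have "0 < \<sigma>"
    using s by (simp add: zero_less_mult_iff)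
  have den: "0 < \<sigma>^2 * s^2 - K^2"
    using power_strict_mono[OF K(2) K(1), of 2] by (simp add: power_mult_distrib)
  have \<Delta>: "0 \<le> \<Delta>"
    unfolding \<Delta>_def using discriminant_nonneg[OF C(2) K] .
  have "\<sigma> * t = K * sqrt q \<longleftrightarrow> (\<sigma> * t)^2 = (K * sqrt q)^2"
    using t K(1) \<open>0 < \<sigma>\<close> q by simp
  also have "\<dots> \<longleftrightarrow> s^2 * (\<sigma>^2 * t^2) = s^2 * (K^2 * q)"
    using q s by (simp add: power_mult_distrib)
  also have "\<dots> \<longleftrightarrow> t^2 * (\<sigma>^2 * s^2 - K^2) = K^2 * (V * s^2 - C^2)"
    unfolding q_def t_def by (simp add: algebra_simps power2_eq_square)
  also have "\<dots> \<longleftrightarrow> t^2 = \<Delta>"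
    unfolding \<Delta>_def using den by (auto simp: field_simps)
  also have "\<dots> \<longleftrightarrow> t = sqrt \<Delta>"
    using t \<Delta> by (auto simp: real_sqrt_unique)
  also have "\<dots> \<longleftrightarrow> l = (sqrt \<Delta> - C) / s^2"
    using s by (auto simp: t_def field_simps)
  finally show ?thesis
    unfolding t_def q_def .
qed

lemma K_bounds_if_eps_bounds:
  fixes \<sigma> s V C K \<epsilon> m :: real
  assumes pos: "0 < \<sigma>" "0 < s" "0 < V" "0 \<le> C"
    and K: "2 * K = m^2 + s^2 + \<sigma>^2 - \<epsilon>"
    and lower: "m^2 + (s - \<sigma>)^2 < \<epsilon>"
    and upper: "\<epsilon> \<le> m^2 + (s - \<sigma>)^2 + 2 * \<sigma> * s * (1 - C / (s * sqrt V))"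
  shows "0 \<le> K" "K < \<sigma> * s" "\<sigma> * C \<le> K * sqrt V"
proof -
  have sq: "(s - \<sigma>)^2 = s^2 + \<sigma>^2 - 2 * \<sigma> * s"
    by (simp add: power2_diff)
  have "2 * \<sigma> * s * (1 - C / (s * sqrt V)) = 2 * \<sigma> * s - 2 * (\<sigma> * C / sqrt V)"
    using pos(2) by (simp add: field_simps)
  then have K_ge: "\<sigma> * C / sqrt V \<le> K"
    using upper K sq by linarith
  have "0 \<le> \<sigma> * C / sqrt V"
    using pos by simp
  with K_ge show "0 \<le> K"
    by linarith
  show "K < \<sigma> * s"
    using lower K sq by linarith
  show "\<sigma> * C \<le> K * sqrt V"
    using K_ge pos(3) by (simp add: pos_divide_le_eq)
qed

theorem lemmaB3:
  fixes M :: "real measure" and \<gamma> :: "real \<Rightarrow> real"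
    and \<mu> \<sigma> \<epsilon> :: real
  defines "Q \<equiv> quantile (cdf M)"
  defines "\<mu>F \<equiv> (\<integral>x. x \<partial>M)"
  defines "\<sigma>F \<equiv> sqrt (\<integral>x. (x - \<mu>F)^2 \<partial>M)"
  defines "c0 \<equiv> corrU Q \<gamma>"
  defines "K \<equiv> (\<mu>F^2 + \<sigma>F^2 + \<mu>^2 + \<sigma>^2 - 2 * \<mu> * \<mu>F - \<epsilon>) / 2"
  defines "V \<equiv> varU \<gamma>"
  defines "C \<equiv> covU Q \<gamma>"
  defines "\<Delta> \<equiv> K^2 * (C^2 - V * \<sigma>F^2) / (K^2 - \<sigma>^2 * \<sigma>F^2)"
  assumes M: "real_distribution M"
    and second_moment: "integrable M (\<lambda>x. x^2)"
    and \<sigma>F_pos: "\<sigma>F > 0"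
    and \<gamma>_mono: "mono_on {0<..<1} \<gamma>"
    and \<gamma>_meas: "set_borel_measurable lborel {0<..<1} \<gamma>"
    and \<gamma>_L2: "set_integrable lborel {0<..<1} (\<lambda>u. (\<gamma> u)^2)"
    and \<gamma>_int: "EU \<gamma> = 1"
    and \<gamma>_nonconst: "\<not> (\<forall>u\<in>{0<..<1}. \<gamma> u = 1)"
    and \<sigma>_pos: "\<sigma> > 0"
    and c0_lt: "c0 < 1"
    and eps_lower: "(\<mu>F - \<mu>)^2 + (\<sigma>F - \<sigma>)^2 < \<epsilon>"
    and eps_upper: "\<epsilon> \<le> (\<mu>F - \<mu>)^2 + (\<sigma>F - \<sigma>)^2 + 2 * \<sigma> * \<sigma>F * (1 - c0)"
  shows "K \<ge> 0 \<and> \<Delta> \<ge> 0 \<and>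
    (let lam0 = (sqrt \<Delta> - C) / \<sigma>F^2 in
      lam0 \<ge> 0 \<and> (dW Q (hfun \<gamma> Q \<mu> \<sigma> lam0))^2 = \<epsilon> \<and>
      (\<forall>lam\<ge>0. (dW Q (hfun \<gamma> Q \<mu> \<sigma> lam))^2 = \<epsilon> \<longrightarrow> lam = lam0))"
proof -
  have Q: "L2U Q" "EU Q = \<mu>F" "varU Q = \<sigma>F^2" "mono_on {0<..<1} Q"
    using quantile_cdf_moments[OF M second_moment] quantile_cdf_distr_U01(3)[OF M] varU_nonneg[of Q]
    unfolding Q_def \<mu>F_def \<sigma>F_def by auto
  have \<gamma>: "L2U \<gamma>"
    using \<gamma>_meas \<gamma>_L2
    by (simp add: L2U_def set_borel_measurable_iff_measurable_U01 set_integrable_iff_integrable_U01)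
  have V: "0 < V"
    unfolding V_def using varU_pos_if_mono_on_nonconst[OF \<gamma> \<gamma>_mono] \<gamma>_int \<gamma>_nonconst by simp
  have C: "0 \<le> C" "C^2 \<le> V * \<sigma>F^2"
    unfolding C_def V_def
    using covU_nonneg_if_mono_on[OF Q(1,4) \<gamma> \<gamma>_mono] covU_sq_le_varU_mult[OF Q(1) \<gamma>] Q(3)
    by (simp_all add: mult.commute)
  have c0: "c0 = C / (\<sigma>F * sqrt V)"
    unfolding c0_def corrU_def stdU_def C_def V_def Q(3) using \<sigma>F_pos by simp
  have K2: "2 * K = (\<mu>F - \<mu>)^2 + \<sigma>F^2 + \<sigma>^2 - \<epsilon>"
    unfolding K_def by (simp add: power2_diff field_simps)
  note K = K_bounds_if_eps_bounds[OF \<sigma>_pos \<sigma>F_pos V C(1) K2 eps_lower eps_upper[unfolded c0]]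
  have dist: "(dW Q (hfun \<gamma> Q \<mu> \<sigma> lam))^2 = \<epsilon> \<longleftrightarrow>
      \<sigma> * (C + lam * \<sigma>F^2) = K * sqrt (V + 2 * lam * C + lam^2 * \<sigma>F^2)" if "0 \<le> lam" for lam
  proof -
    have "0 < V + 2 * lam * C + lam^2 * \<sigma>F^2"
      using V C(1) that by (simp add: add_pos_nonneg)
    then show ?thesis
      using dW_hfun_sq_eq_iff[OF Q(1) \<gamma> _ K2[folded Q(2,3)]] unfolding C_def V_def Q(3) by blast
  qed
  show ?thesis
    unfolding Let_def \<Delta>_def
    using K(1) discriminant_nonneg[OF C(2) K(1,2)] le_sqrt_discriminant[OF \<sigma>F_pos V C(1) K] \<sigma>F_pos dist
      scaled_eq_sqrt_quadratic_iff[OF \<sigma>F_pos V C K(1,2)] by auto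
qed

end
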